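(* Let $K\subset\mathbb{R}$ be a real biquadratic bicyclic number field with quadratic subfields $k_1,k_2,k_3$, let $\varepsilon_i>1$ be the fundamental unit of $k_i$ and $\lambda_i=N_{k_i/\mathbb{Q}}(\varepsilon_i)$. Let $\eta=\mathrm{sgn}(\eta)\,\varepsilon_1^{m_1}\varepsilon_2^{m_2}\varepsilon_3^{m_3}\in\mathcal{O}_{k_1}^\times\mathcal{O}_{k_2}^\times\mathcal{O}_{k_3}^\times$ with $m_1,m_2,m_3\in\mathbb{Z}$. Then $\eta\in\mathcal{O}_K^*$ if and only if $\lambda_1^{m_1}=\lambda_2^{m_2}=\lambda_3^{m_3}$.
   Context: $\mathcal{O}_k^\times$ denotes the unit group of the ring of integers of a number field $k$. For real $K$, $\mathcal{O}_K^*$ is defined as the set of $\eta\in\mathcal{O}_{k_1}^\times\mathcal{O}_{k_2}^\times\mathcal{O}_{k_3}^\times$ that are totally positive or totally negative (i.e. all conjugates of $\eta$ have the same sign). $\mathrm{sgn}(x)$ is the sign of $x$. *)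

theory Defs
  imports Complex_Main "HOL-Computational_Algebra.Polynomial" "HOL-Computational_Algebra.Squarefree"
begin

definition quad_field :: "int \<Rightarrow> real set" where
  "quad_field d = {of_rat p + of_rat q * sqrt (real_of_int d) | p q. True}"

definition quad_ints :: "int \<Rightarrow> real set" where
  "quad_ints d = {x \<in> quad_field d. algebraic_int x}"

definition quad_units :: "int \<Rightarrow> real set" where
  "quad_units d = {x \<in> quad_ints d. x \<noteq> 0 \<and> inverse x \<in> quad_ints d}"

definition fund_unit :: "int \<Rightarrow> real \<Rightarrow> bool" where
  "fund_unit d \<epsilon> \<longleftrightarrow> \<epsilon> \<in> quad_units d \<and> \<epsilon> > 1 \<and>
     (\<forall>u \<in> quad_units d. \<exists>n::int. u = \<epsilon> powi n \<or> u = - (\<epsilon> powi n))"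

definition quad_norm :: "int \<Rightarrow> real \<Rightarrow> real" where
  "quad_norm d x = (THE n. \<exists>p q :: rat. x = of_rat p + of_rat q * sqrt (real_of_int d) \<and>
       n = of_rat (p^2 - of_int d * q^2))"

definition prod_units :: "int \<Rightarrow> int \<Rightarrow> int \<Rightarrow> real set" where
  "prod_units d1 d2 d3 = {a * b * c | a b c. a \<in> quad_units d1 \<and> b \<in> quad_units d2 \<and> c \<in> quad_units d3}"

text \<open>x lies in K = Q(sqrt d1, sqrt d2) and all its conjugates (images under the four
  automorphisms sqrt d1 -> s sqrt d1, sqrt d2 -> t sqrt d2) have the same sign as x.\<close>
definition totally_signed :: "int \<Rightarrow> int \<Rightarrow> real \<Rightarrow> bool" where
  "totally_signed d1 d2 x \<longleftrightarrow>
    (\<exists>a b c e :: rat.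
       x = of_rat a + of_rat b * sqrt (real_of_int d1) + of_rat c * sqrt (real_of_int d2)
           + of_rat e * sqrt (real_of_int (d1 * d2)) \<and>
       (\<forall>s \<in> {-1, 1::real}. \<forall>t \<in> {-1, 1::real}.
          sgn (of_rat a + s * of_rat b * sqrt (real_of_int d1) + t * of_rat c * sqrt (real_of_int d2)
               + s * t * of_rat e * sqrt (real_of_int (d1 * d2))) = sgn x))"

definition OK_star :: "int \<Rightarrow> int \<Rightarrow> int \<Rightarrow> real set" where
  "OK_star d1 d2 d3 = {x \<in> prod_units d1 d2 d3. totally_signed d1 d2 x}"

end

theory Submission
  imports Defs
begin

(* Every unit y of k_i is p + q sqrt d_i with norm N(y) = y (p - q sqrt d_i) = +-1, so its Galois
   conjugate is N(y) / y and has sign N(y) sgn y. The automorphism sqrt d1 -> s sqrt d1,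
   sqrt d2 -> t sqrt d2 of K conjugates the factor from k1 iff s = -1, from k2 iff t = -1 and from k3
   iff s t = -1. Hence the four conjugates of eta = y1 y2 y3 have the signs sgn eta, N2 N3 sgn eta,
   N1 N3 sgn eta and N1 N2 sgn eta, and eta is totally positive or negative iff N1 = N2 = N3; finally
   N(s eps_i^m_i) = lambda_i^m_i. The coordinates of eta in the basis 1, sqrt d1, sqrt d2, sqrt(d1 d2)
   are unique, so the conjugates are well defined. That the unit groups are closed under products rests
   on Gauss's lemma: p + q sqrt d is an algebraic integer iff 2p and p^2 - d q^2 are integers. *)

lemma map_poly_add:
  assumes "f 0 = 0" "\<And>x y. f (x + y) = f x + f y"
  shows "map_poly f (p + q) = map_poly f p + map_poly f q"
  by (rule poly_eqI) (simp add: coeff_map_poly assms)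

lemma map_poly_mult:
  fixes f :: "'a::comm_ring_1 \<Rightarrow> 'b::comm_ring_1"
  assumes "f 0 = 0" "\<And>x y. f (x + y) = f x + f y" "\<And>x y. f (x * y) = f x * f y"
  shows "map_poly f (p * q) = map_poly f p * map_poly f q"
proof (induction p)
  case (pCons a p)
  have "map_poly f (pCons a p * q) = map_poly f (smult a q) + map_poly f (pCons 0 (p * q))"
    by (simp add: map_poly_add assms)
  also have "\<dots> = pCons (f a) (map_poly f p) * map_poly f q"
    using pCons.IH assms by (simp add: map_poly_smult map_poly_pCons)
  finally show ?case
    using assms by (simp add: map_poly_pCons)
qed simp

lemma rat_poly_clear_denominators:
  fixes A :: "rat poly"
  obtains a :: int and A' :: "int poly" where "a > 0" "map_poly of_int A' = smult (of_int a) A"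
proof -
  have "\<exists>a A'. a > (0::int) \<and> map_poly of_int A' = smult (of_int a) A"
  proof (induction A)
    case 0
    show ?case by (intro exI[of _ 1] exI[of _ 0]) simp
  next
    case (pCons c A)
    then obtain a A' where a: "a > 0" "map_poly of_int A' = smult (of_int a) A" by blast
    obtain n k where nk: "quotient_of c = (n, k)" by force
    have "k > 0" "c = of_int n / of_int k"
      using quotient_of_denom_pos[OF nk] quotient_of_div[OF nk] by auto
    with a have "map_poly of_int (pCons (n * a) (smult k A')) = smult (of_int (a * k)) (pCons c A)"
      by (simp add: map_poly_pCons map_poly_smult field_simps)
    with a \<open>k > 0\<close> show ?case by (metis mult_pos_pos)
  qed
  with that show ?thesis by blast
qed

lemma monic_factor_of_int_poly_coeff_Ints:
  fixes P :: "int poly" and A B :: "rat poly"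
  assumes P: "lead_coeff P = 1" and factor: "map_poly of_int P = A * B" and A: "lead_coeff A = 1"
  shows "coeff A i \<in> \<int>"
proof -
  obtain a A' where a: "a > 0" "map_poly of_int A' = smult (of_int a) A"
    by (rule rat_poly_clear_denominators)
  obtain b B' where b: "b > 0" "map_poly of_int B' = smult (of_int b) B"
    by (rule rat_poly_clear_denominators)
  have hom: "map_poly (of_int :: int \<Rightarrow> rat) (p * q) = map_poly of_int p * map_poly of_int q" for p q
    by (rule map_poly_mult) auto
  have "lead_coeff (map_poly (of_int :: int \<Rightarrow> rat) P) = 1"
    using P by (simp add: degree_map_poly coeff_map_poly)
  then have B: "lead_coeff B = 1"
    using factor A by (simp add: lead_coeff_mult)
  have "map_poly (of_int :: int \<Rightarrow> rat) (A' * B') = map_poly of_int (smult (a * b) P)"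
    using a(2) b(2) factor by (simp add: hom map_poly_smult mult_ac)
  then have "A' * B' = smult (a * b) P"
    by (intro poly_eqI) (metis coeff_map_poly of_int_0 of_int_eq_iff)
  moreover have "content P = 1"
    using content_dvd_coeff[of P "degree P"] P by (simp add: content_def)
  ultimately have "content A' * content B' = a * b"
    using a(1) b(1) by (smt (verit) content_mult content_smult mult_cancel_left1
      normalize_int_def zero_less_mult_iff)
  moreover have "lead_coeff A' = a" "lead_coeff B' = b"
    using a b A B by (metis coeff_map_poly degree_map_poly lead_coeff_smult mult.right_neutral
      of_int_eq_iff of_int_0 of_int_eq_0_iff)+
  then have "content A' dvd a" "content B' dvd b"
    by (metis content_dvd_coeff)+
  moreover have "content A' \<ge> 0"
    by (simp add: content_def)
  ultimately have "content A' = a"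
    using a(1) b(1) by (smt (verit, best) mult_le_0_iff mult_less_le_imp_less zdvd_imp_le)
  then obtain z where "coeff A' i = a * z"
    by (metis content_dvd_coeff dvdE)
  moreover have "of_int (coeff A' i) = of_int a * coeff A i"
    using arg_cong[OF a(2), of "\<lambda>p. coeff p i"] by (simp add: coeff_map_poly)
  ultimately show ?thesis
    using a(1) by (smt (verit, del_insts) Ints_of_int mult_cancel_left of_int_0_less_iff of_int_mult)
qed

lemma of_rat_in_Ints_iff [simp]: "(of_rat r :: 'a :: field_char_0) \<in> \<int> \<longleftrightarrow> r \<in> \<int>"
proof
  assume "of_rat r \<in> (\<int> :: 'a set)"
  then obtain k where "(of_rat r :: 'a) = of_int k"
    by (elim Ints_cases)
  then have "r = of_int k"
    by (metis of_rat_eq_iff of_rat_of_int_eq)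
  then show "r \<in> \<int>" by simp
next
  assume "r \<in> \<int>"
  then show "(of_rat r :: 'a) \<in> \<int>"
    by (elim Ints_cases) simp
qed

lemma algebraic_int_quadratic_root:
  fixes x t n :: "'a :: field_char_0"
  assumes "t \<in> \<int>" "n \<in> \<int>" "x * x = t * x - n"
  shows "algebraic_int x"
proof
  show "lead_coeff [:n, -t, 1:] = 1" by simp
  show "\<forall>i. coeff [:n, -t, 1:] i \<in> \<int>"
    using assms(1,2) by (simp add: coeff_pCons split: nat.split)
  show "poly [:n, -t, 1:] x = 0"
    using assms(3) by (simp add: algebra_simps)
qed

lemma rat_root_of_int_quadratic_Ints:
  fixes r t n :: rat
  assumes "t \<in> \<int>" "n \<in> \<int>" "r * r = t * r - n"
  shows "r \<in> \<int>"
proof -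
  have "algebraic_int (of_rat r :: real)"
    by (rule algebraic_int_quadratic_root[of "of_rat t" "of_rat n"])
       (use assms in \<open>simp_all flip: of_rat_mult of_rat_diff\<close>)
  then show ?thesis
    using rational_algebraic_int_is_int[of "of_rat r :: real"] by simp
qed

lemma of_rat_add_mult_irrational_eq_0_iff:
  fixes x :: "'a :: field_char_0"
  assumes "x \<notin> \<rat>"
  shows "of_rat a + of_rat b * x = 0 \<longleftrightarrow> a = 0 \<and> b = 0"
proof
  assume zero: "of_rat a + of_rat b * x = 0"
  have "b = 0"
  proof (rule ccontr)
    assume "b \<noteq> 0"
    with zero have "x = of_rat (- a / b)"
      by (simp add: of_rat_divide of_rat_minus field_simps eq_neg_iff_add_eq_0)
    with assms show False by simp
  qed
  with zero show "a = 0 \<and> b = 0" by simp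
qed simp

lemma algebraic_int_quadratic_coeffs_Ints:
  fixes x :: "'a :: field_char_0" and t n :: rat
  assumes "algebraic_int x" "x \<notin> \<rat>" "x * x = of_rat t * x - of_rat n"
  shows "t \<in> \<int>" "n \<in> \<int>"
proof -
  obtain P where P: "poly (map_poly of_int P) x = 0" "lead_coeff P = 1"
    using assms(1) algebraic_int_altdef_ipoly by blast
  \<comment> \<open>\<open>m\<close> is the minimal polynomial of \<open>x\<close>, so it divides \<open>P\<close> and Gauss's lemma makes it integral\<close>
  define m where "m = [:n, -t, 1:]"
  define ev where "ev A = poly (map_poly (of_rat :: rat \<Rightarrow> 'a) A) x" for A
  have ev_add: "ev (A + B) = ev A + ev B" and ev_mult: "ev (A * B) = ev A * ev B" for A B
    unfolding ev_def by (simp_all add: map_poly_add map_poly_mult of_rat_add of_rat_mult)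
  define R where "R = map_poly of_int P mod m"
  have "ev (map_poly of_int P) = ev (map_poly of_int P div m) * ev m + ev R"
    unfolding R_def by (metis div_mult_mod_eq ev_add ev_mult)
  moreover have "ev (map_poly of_int P) = 0"
    using P(1) by (simp add: ev_def map_poly_map_poly o_def)
  moreover have "ev m = 0"
    using assms(3) by (simp add: ev_def m_def map_poly_pCons of_rat_minus algebra_simps)
  ultimately have "ev R = 0"
    by simp
  moreover have "degree R \<le> 1"
    using degree_mod_less[of m "map_poly of_int P"] by (auto simp: R_def m_def)
  then have R: "R = [:coeff R 0, coeff R 1:]"
    by (intro poly_eqI) (auto simp: coeff_pCons coeff_eq_0 split: nat.splits)
  ultimately have "of_rat (coeff R 0) + of_rat (coeff R 1) * x = 0"
    unfolding ev_def by (subst (asm) R) (simp add: map_poly_pCons mult.commute)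
  then have "R = 0"
    using R assms(2) by (simp add: of_rat_add_mult_irrational_eq_0_iff)
  then have "map_poly of_int P = m * (map_poly of_int P div m)"
    by (metis R_def div_mult_mod_eq add_0_right mult.commute)
  then have "coeff m i \<in> \<int>" for i
    by (rule monic_factor_of_int_poly_coeff_Ints[OF P(2)]) (simp add: m_def)
  from this[of 0] this[of 1] show "t \<in> \<int>" "n \<in> \<int>"
    by (simp_all add: m_def)
qed

lemma irrational_not_in_quadratic_span:
  fixes u v :: "'a :: field_char_0"
  assumes irr: "u \<notin> \<rat>" "v \<notin> \<rat>" "u * v \<notin> \<rat>"
    and sq: "u * u = of_rat D1" "v * v = of_rat D2"
  shows "v \<noteq> of_rat \<alpha> + of_rat \<beta> * u"
proof
  assume v: "v = of_rat \<alpha> + of_rat \<beta> * u"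
  then have "of_rat (\<alpha> * \<alpha> + \<beta> * \<beta> * D1 - D2) + of_rat (2 * \<alpha> * \<beta>) * u = 0"
    using sq by (simp add: of_rat_add of_rat_diff of_rat_mult algebra_simps flip: sq(2))
  then have "\<alpha> = 0 \<or> \<beta> = 0"
    using irr(1) by (simp add: of_rat_add_mult_irrational_eq_0_iff)
  then show False
  proof
    assume "\<alpha> = 0"
    then have "u * v = of_rat (\<beta> * D1)"
      using v sq(1) by (simp add: of_rat_mult algebra_simps)
    with irr(3) show False by simp
  next
    assume "\<beta> = 0"
    with v irr(2) show False by simp
  qed
qed

lemma of_rat_biquadratic_eq_0_iff:
  fixes u v :: "'a :: field_char_0"
  assumes irr: "u \<notin> \<rat>" "v \<notin> \<rat>" "u * v \<notin> \<rat>"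
    and sq: "u * u = of_rat D1" "v * v = of_rat D2"
  shows "of_rat a + of_rat b * u + of_rat c * v + of_rat e * (u * v) = 0 \<longleftrightarrow>
    a = 0 \<and> b = 0 \<and> c = 0 \<and> e = 0"
proof
  assume zero: "of_rat a + of_rat b * u + of_rat c * v + of_rat e * (u * v) = 0"
  define \<Delta> where "\<Delta> = c * c - e * e * D1"
  \<comment> \<open>multiplying by the conjugate \<open>c - e u\<close> of the coefficient of \<open>v\<close> isolates \<open>v\<close>\<close>
  have "of_rat \<Delta> * v = of_rat (b * e * D1 - a * c) + of_rat (a * e - b * c) * u"
  proof -
    have "of_rat \<Delta> * v - of_rat (b * e * D1 - a * c) - of_rat (a * e - b * c) * u
        = (of_rat a + of_rat b * u + of_rat c * v + of_rat e * (u * v)) * (of_rat c - of_rat e * u)"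
      unfolding \<Delta>_def of_rat_diff of_rat_mult sq(1)[symmetric] by algebra
    with zero show ?thesis
      by (simp add: algebra_simps)
  qed
  have "\<Delta> = 0"
  proof (rule ccontr)
    assume "\<Delta> \<noteq> 0"
    with \<open>of_rat \<Delta> * v = _\<close> have "v = of_rat ((b * e * D1 - a * c) / \<Delta>) + of_rat ((a * e - b * c) / \<Delta>) * u"
      by (simp add: of_rat_divide of_rat_minus field_simps)
    with irrational_not_in_quadratic_span[OF irr sq] show False by blast
  qed
  have "e = 0"
  proof (rule ccontr)
    assume "e \<noteq> 0"
    with \<open>\<Delta> = 0\<close> have "D1 = (c / e) * (c / e)"
      by (simp add: \<Delta>_def field_simps)
    then have "(u - of_rat (c / e)) * (u + of_rat (c / e)) = 0"
      using sq(1) by (simp add: algebra_simps flip: of_rat_mult)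
    then have "u = of_rat (c / e) \<or> u = - of_rat (c / e)"
      by (simp add: eq_neg_iff_add_eq_0)
    with irr(1) show False
      by (metis Rats_minus_iff Rats_of_rat)
  qed
  with \<open>\<Delta> = 0\<close> have "c = 0"
    by (simp add: \<Delta>_def)
  with zero \<open>e = 0\<close> irr(1) show "a = 0 \<and> b = 0 \<and> c = 0 \<and> e = 0"
    by (simp add: of_rat_add_mult_irrational_eq_0_iff)
qed simp

lemma biquadratic_product_coords:
  fixes u v :: "'a :: field_char_0"
  assumes "u * u = of_rat D1" "v * v = of_rat D2"
  shows "(of_rat a1 + of_rat b1 * u) * (of_rat a2 + of_rat b2 * v) * (of_rat a3 + of_rat b3 * (u * v))
    = of_rat (a1 * a2 * a3 + b1 * b2 * b3 * D1 * D2) + of_rat (b1 * a2 * a3 + a1 * b2 * b3 * D2) * u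
      + of_rat (a1 * b2 * a3 + b1 * a2 * b3 * D1) * v + of_rat (a1 * a2 * b3 + b1 * b2 * a3) * (u * v)"
  unfolding of_rat_add of_rat_mult assms[symmetric] by algebra

lemma sqrt_squarefree_not_rat:
  fixes d :: int
  assumes "d > 1" "squarefree d"
  shows "sqrt (real_of_int d) \<notin> \<rat>"
proof
  assume "sqrt (real_of_int d) \<in> \<rat>"
  then obtain a b :: int where ab: "b > 0" "coprime a b" and sqrt_d: "sqrt (real_of_int d) = of_int a / of_int b"
    by (auto elim: Rats_cases')
  have "real_of_int d = (of_int a / of_int b)\<^sup>2"
    using assms(1) by (simp flip: sqrt_d)
  then have "d * b\<^sup>2 = a\<^sup>2"
    using ab(1) by (simp add: field_simps flip: of_int_power of_int_mult)
  then have "b dvd a\<^sup>2"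
    by (metis dvd_triv_right power2_eq_square dvd_mult_left)
  with ab have "b = 1"
    by (metis coprime_commute coprime_power_right_iff coprime_common_divisor dvd_refl zdvd1_eq abs_of_pos)
  with \<open>d * b\<^sup>2 = a\<^sup>2\<close> have "a\<^sup>2 dvd d"
    by simp
  then have "a dvd 1"
    using assms(2) squarefreeD by blast
  then have "a\<^sup>2 = 1"
    by (metis power2_abs power_one zdvd1_eq)
  with \<open>d * b\<^sup>2 = a\<^sup>2\<close> \<open>b = 1\<close> assms(1) show False
    by simp
qed

lemma squarefree_part_of_product:
  fixes d1 d2 :: int
  assumes "d1 > 1" "d2 > 1" "squarefree d1" "squarefree d2" "d1 \<noteq> d2"
  defines "d3 \<equiv> (d1 * d2) div (gcd d1 d2)\<^sup>2"
  shows "d1 * d2 = (gcd d1 d2)\<^sup>2 * d3" "d3 > 1" "squarefree d3"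
proof -
  define g where "g = gcd d1 d2"
  have "g > 0"
    using assms(1) by (simp add: g_def)
  obtain a b where a: "d1 = a * g" and b: "d2 = b * g" and "coprime a b"
    using gcd_coprime_exists[of d1 d2] \<open>g > 0\<close> unfolding g_def by auto
  then have "d1 * d2 = g\<^sup>2 * (a * b)"
    by (simp add: power2_eq_square algebra_simps)
  with \<open>g > 0\<close> have d3: "d3 = a * b"
    by (simp add: d3_def g_def [symmetric])
  with \<open>d1 * d2 = g\<^sup>2 * (a * b)\<close> show "d1 * d2 = (gcd d1 d2)\<^sup>2 * d3"
    by (simp add: g_def)
  have "a > 0" "b > 0"
    using a b \<open>g > 0\<close> assms(1,2) by (smt (verit) zero_less_mult_iff)+
  with a b assms(5) have "a \<noteq> 1 \<or> b \<noteq> 1"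
    by auto
  with \<open>a > 0\<close> \<open>b > 0\<close> show "d3 > 1"
    unfolding d3 by (smt (verit) mult_le_cancel_left1 mult_le_cancel_right1)
  have "squarefree a" "squarefree b"
    using assms(3,4) a b squarefree_multD by blast+
  with \<open>coprime a b\<close> show "squarefree d3"
    by (simp add: d3 squarefree_mult_coprime)
qed

locale real_quadratic =
  fixes d :: int
  assumes gt_1: "d > 1" and squarefree: "squarefree d"
begin

abbreviation \<omega> :: real where "\<omega> \<equiv> sqrt (real_of_int d)"

lemma \<omega>_not_rat: "\<omega> \<notin> \<rat>"
  using sqrt_squarefree_not_rat gt_1 squarefree by blast

lemma \<omega>_square: "\<omega> * \<omega> = of_rat (of_int d)"
  using gt_1 by simp

lemma coords_eq_iff:
  "of_rat p + of_rat q * \<omega> = of_rat p' + of_rat q' * \<omega> \<longleftrightarrow> p = p' \<and> q = q'"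
  using of_rat_add_mult_irrational_eq_0_iff[OF \<omega>_not_rat, of "p - p'" "q - q'"]
  by (auto simp: of_rat_diff algebra_simps)

lemma coords_mult:
  "(of_rat p + of_rat q * \<omega>) * (of_rat p' + of_rat q' * \<omega>)
    = of_rat (p * p' + of_int d * q * q') + of_rat (p * q' + q * p') * \<omega>"
  using \<omega>_square by (simp add: of_rat_add of_rat_mult algebra_simps)

lemma quad_norm_coords: "quad_norm d (of_rat p + of_rat q * \<omega>) = of_rat (p\<^sup>2 - of_int d * q\<^sup>2)"
  unfolding quad_norm_def by (rule the_equality) (auto simp: coords_eq_iff)

lemma quad_norm_mult:
  assumes "x \<in> quad_field d" "y \<in> quad_field d"
  shows "quad_norm d (x * y) = quad_norm d x * quad_norm d y"
  using assms unfolding quad_field_def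
  by (auto simp: coords_mult quad_norm_coords simp flip: of_rat_mult intro!: arg_cong[where f = of_rat])
     (simp add: power2_eq_square algebra_simps)

lemma coords_quadratic_equation:
  "(of_rat p + of_rat q * \<omega>) * (of_rat p + of_rat q * \<omega>)
    = of_rat (2 * p) * (of_rat p + of_rat q * \<omega>) - of_rat (p\<^sup>2 - of_int d * q\<^sup>2)"
  using \<omega>_square by (simp add: of_rat_add of_rat_diff of_rat_mult power2_eq_square algebra_simps)

lemma coords_in_quad_ints_iff:
  "of_rat p + of_rat q * \<omega> \<in> quad_ints d \<longleftrightarrow> 2 * p \<in> \<int> \<and> p\<^sup>2 - of_int d * q\<^sup>2 \<in> \<int>"
proof
  assume "of_rat p + of_rat q * \<omega> \<in> quad_ints d"
  then have int: "algebraic_int (of_rat p + of_rat q * \<omega>)"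
    by (simp add: quad_ints_def)
  show "2 * p \<in> \<int> \<and> p\<^sup>2 - of_int d * q\<^sup>2 \<in> \<int>"
  proof (cases "q = 0")
    case True
    with int have "p \<in> \<int>"
      using rational_algebraic_int_is_int[of "of_rat p :: real"] by simp
    with True show ?thesis by simp
  next
    case False
    then have "of_rat p + of_rat q * \<omega> \<notin> \<rat>"
      using \<omega>_not_rat by (metis Rats_add_iff Rats_divide Rats_of_rat add_diff_cancel_left'
        nonzero_mult_div_cancel_left of_rat_eq_0_iff)
    with int show ?thesis
      using algebraic_int_quadratic_coeffs_Ints coords_quadratic_equation by blast
  qed
next
  assume "2 * p \<in> \<int> \<and> p\<^sup>2 - of_int d * q\<^sup>2 \<in> \<int>"
  then have "algebraic_int (of_rat p + of_rat q * \<omega>)"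
    by (intro algebraic_int_quadratic_root[OF _ _ coords_quadratic_equation]) simp_all
  then show "of_rat p + of_rat q * \<omega> \<in> quad_ints d"
    by (auto simp: quad_ints_def quad_field_def)
qed

lemma quad_ints_mult:
  assumes "x \<in> quad_ints d" "y \<in> quad_ints d"
  shows "x * y \<in> quad_ints d"
proof -
  obtain p q p' q' where xy: "x = of_rat p + of_rat q * \<omega>" "y = of_rat p' + of_rat q' * \<omega>"
    using assms by (auto simp: quad_ints_def quad_field_def)
  define N N' where "N = p\<^sup>2 - of_int d * q\<^sup>2" and "N' = p'\<^sup>2 - of_int d * q'\<^sup>2"
  define t t' where "t = 2 * p" and "t' = 2 * p'"
  define P Q where "P = p * p' + of_int d * q * q'" and "Q = p * q' + q * p'"
  have ints: "t \<in> \<int>" "N \<in> \<int>" "t' \<in> \<int>" "N' \<in> \<int>"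
    using assms by (simp_all add: xy coords_in_quad_ints_iff t_def t'_def N_def N'_def)
  \<comment> \<open>\<open>2 P\<close> is the trace of \<open>x y\<close>, a rational root of a monic integer quadratic\<close>
  have trace: "(2 * P) * (2 * P) = (t * t') * (2 * P) - (N * t'\<^sup>2 + N' * t\<^sup>2 - 4 * N * N')"
    by (simp add: P_def N_def N'_def t_def t'_def power2_eq_square algebra_simps)
  have "t * t' \<in> \<int>" "N * t'\<^sup>2 + N' * t\<^sup>2 - 4 * N * N' \<in> \<int>"
    using ints by simp_all
  then have "2 * P \<in> \<int>"
    using trace by (rule rat_root_of_int_quadratic_Ints)
  moreover have "P\<^sup>2 - of_int d * Q\<^sup>2 = N * N'"
    by (simp add: P_def Q_def N_def N'_def power2_eq_square algebra_simps)
  moreover have "x * y = of_rat P + of_rat Q * \<omega>"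
    by (simp add: xy coords_mult P_def Q_def)
  ultimately show ?thesis
    using ints by (simp add: coords_in_quad_ints_iff)
qed

lemma quad_units_mult: "x \<in> quad_units d \<Longrightarrow> y \<in> quad_units d \<Longrightarrow> x * y \<in> quad_units d"
  by (auto simp: quad_units_def quad_ints_mult)

lemma quad_units_inverse: "x \<in> quad_units d \<Longrightarrow> inverse x \<in> quad_units d"
  by (simp add: quad_units_def)

lemma sign_in_quad_units:
  assumes "s \<in> {-1, 1}"
  shows "s \<in> quad_units d"
proof -
  have "of_rat r + of_rat 0 * \<omega> \<in> quad_ints d" if "r \<in> \<int>" for r
    unfolding coords_in_quad_ints_iff using that by simp
  from this[of 1] this[of "-1"] have "1 \<in> quad_ints d" "-1 \<in> quad_ints d"
    by simp_all
  with assms show ?thesis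
    unfolding quad_units_def by auto
qed

lemma quad_units_power: "x \<in> quad_units d \<Longrightarrow> x ^ n \<in> quad_units d"
  by (induction n) (simp_all add: sign_in_quad_units quad_units_mult)

lemma quad_units_powi: "x \<in> quad_units d \<Longrightarrow> x powi m \<in> quad_units d"
  by (cases m rule: int_cases4) (simp_all add: power_int_minus quad_units_power quad_units_inverse)

lemma quad_units_subset_quad_field: "quad_units d \<subseteq> quad_field d"
  by (auto simp: quad_units_def quad_ints_def)

lemma quad_unitsE:
  assumes "x \<in> quad_units d"
  obtains p q where "x = of_rat p + of_rat q * \<omega>"
  using assms by (auto simp: quad_units_def quad_ints_def quad_field_def)

lemma quad_norm_in_Ints:
  assumes "x \<in> quad_ints d"
  shows "quad_norm d x \<in> \<int>"
proof -
  from assms obtain p q where x: "x = of_rat p + of_rat q * \<omega>"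
    by (auto simp: quad_ints_def quad_field_def)
  with assms have "p\<^sup>2 - of_int d * q\<^sup>2 \<in> \<int>"
    by (simp add: coords_in_quad_ints_iff)
  then show ?thesis
    by (simp add: x quad_norm_coords)
qed

lemma quad_norm_1: "quad_norm d 1 = 1"
  using quad_norm_coords[of 1 0] by simp

lemma quad_norm_mult_inverse:
  assumes "x \<in> quad_units d"
  shows "quad_norm d x * quad_norm d (inverse x) = 1"
proof -
  have "x \<in> quad_field d" "inverse x \<in> quad_field d" "x \<noteq> 0"
    using assms quad_units_inverse quad_units_subset_quad_field by (auto simp: quad_units_def)
  then show ?thesis
    by (simp flip: quad_norm_mult add: quad_norm_1)
qed

lemma quad_norm_inverse:
  "x \<in> quad_units d \<Longrightarrow> quad_norm d (inverse x) = inverse (quad_norm d x)"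
  by (metis inverse_unique quad_norm_mult_inverse)

lemma quad_norm_unit:
  assumes "x \<in> quad_units d"
  shows "quad_norm d x = 1 \<or> quad_norm d x = -1"
proof -
  have "quad_norm d x \<in> \<int>" "quad_norm d (inverse x) \<in> \<int>"
    using assms by (simp_all add: quad_units_def quad_norm_in_Ints)
  then obtain k k' where k: "quad_norm d x = of_int k" and "quad_norm d (inverse x) = of_int k'"
    by (elim Ints_cases)
  with quad_norm_mult_inverse[OF assms] have "k * k' = 1"
    by (metis of_int_mult of_int_eq_1_iff)
  with k show ?thesis
    by (auto simp: zmult_eq_1_iff)
qed

lemma quad_norm_minus:
  assumes "x \<in> quad_field d"
  shows "quad_norm d (- x) = quad_norm d x"
proof -
  obtain p q where x: "x = of_rat p + of_rat q * \<omega>"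
    using assms by (auto simp: quad_field_def)
  then have "- x = of_rat (- p) + of_rat (- q) * \<omega>"
    by (simp add: of_rat_minus)
  then show ?thesis
    by (simp add: x quad_norm_coords)
qed

lemma quad_norm_power: "x \<in> quad_units d \<Longrightarrow> quad_norm d (x ^ n) = quad_norm d x ^ n"
  by (induction n)
     (simp_all add: quad_norm_1 quad_norm_mult quad_units_power subsetD[OF quad_units_subset_quad_field])

lemma quad_norm_powi: "x \<in> quad_units d \<Longrightarrow> quad_norm d (x powi m) = quad_norm d x powi m"
  by (cases m rule: int_cases4)
     (simp_all add: power_int_minus quad_norm_power quad_norm_inverse quad_units_power)

lemma sgn_conjugate_unit:
  assumes "x \<in> quad_units d" "x = of_rat p + of_rat q * \<omega>" "\<sigma> \<in> {-1, 1}"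
  shows "sgn (of_rat p + of_rat q * (\<sigma> * \<omega>)) = (if \<sigma> = 1 then 1 else quad_norm d x) * sgn x"
proof (cases "\<sigma> = 1")
  case False
  then have "\<sigma> = -1"
    using assms(3) by simp
  have "x * (of_rat p + of_rat (- q) * \<omega>) = quad_norm d x"
    by (simp add: assms(2) coords_mult quad_norm_coords power2_eq_square)
  moreover have "x \<noteq> 0"
    using assms(1) by (simp add: quad_units_def)
  ultimately have "of_rat p + of_rat q * (\<sigma> * \<omega>) = quad_norm d x / x"
    using \<open>\<sigma> = -1\<close> by (simp add: of_rat_minus field_simps)
  with False quad_norm_unit[OF assms(1)] show ?thesis
    by (auto simp: sgn_divide)
qed (simp add: assms(2))

end

locale real_biquadratic =
  k1: real_quadratic d1 + k2: real_quadratic d2 for d1 d2 +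
  fixes d3 :: int
  assumes distinct: "d1 \<noteq> d2" and d3_def: "d3 = (d1 * d2) div (gcd d1 d2)\<^sup>2"
begin

lemmas d3_facts = squarefree_part_of_product[OF k1.gt_1 k2.gt_1 k1.squarefree k2.squarefree distinct,
  folded d3_def]

sublocale k3: real_quadratic d3
  using d3_facts by unfold_locales simp_all

lemma sqrt_d1_d2: "sqrt (real_of_int (d1 * d2)) = k1.\<omega> * k2.\<omega>"
  by (simp add: real_sqrt_mult)

lemma \<omega>_d1_d2_eq: "k1.\<omega> * k2.\<omega> = of_int (gcd d1 d2) * k3.\<omega>"
proof -
  have "k1.\<omega> * k2.\<omega> = sqrt ((of_int (gcd d1 d2))\<^sup>2 * real_of_int d3)"
    by (simp flip: sqrt_d1_d2 add: d3_facts(1))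
  then show ?thesis
    by (simp add: real_sqrt_mult)
qed

lemma \<omega>_d1_d2_not_rat: "k1.\<omega> * k2.\<omega> \<notin> \<rat>"
proof
  assume "k1.\<omega> * k2.\<omega> \<in> \<rat>"
  then have "k1.\<omega> * k2.\<omega> / of_int (gcd d1 d2) \<in> \<rat>"
    by simp
  with k3.\<omega>_not_rat show False
    using k1.gt_1 by (simp add: \<omega>_d1_d2_eq)
qed

text \<open>The image of \<open>a + b \<surd>d1 + c \<surd>d2 + e \<surd>(d1 d2)\<close> under the automorphism
  \<open>\<surd>d1 \<mapsto> \<sigma> \<surd>d1\<close>, \<open>\<surd>d2 \<mapsto> \<tau> \<surd>d2\<close>, written as in the definition of \<open>totally_signed\<close>.\<close>
definition conjugate :: "rat \<Rightarrow> rat \<Rightarrow> rat \<Rightarrow> rat \<Rightarrow> real \<Rightarrow> real \<Rightarrow> real" where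
  "conjugate a b c e \<sigma> \<tau> = of_rat a + \<sigma> * of_rat b * k1.\<omega> + \<tau> * of_rat c * k2.\<omega>
     + \<sigma> * \<tau> * of_rat e * sqrt (real_of_int (d1 * d2))"

lemma conjugate_eq: "conjugate a b c e \<sigma> \<tau>
  = of_rat a + of_rat b * (\<sigma> * k1.\<omega>) + of_rat c * (\<tau> * k2.\<omega>) + of_rat e * ((\<sigma> * k1.\<omega>) * (\<tau> * k2.\<omega>))"
  unfolding conjugate_def sqrt_d1_d2 by (simp add: algebra_simps)

lemma conjugate_eq_iff:
  "conjugate a b c e 1 1 = conjugate a' b' c' e' 1 1 \<longleftrightarrow> a = a' \<and> b = b' \<and> c = c' \<and> e = e'"
  using of_rat_biquadratic_eq_0_iff[OF k1.\<omega>_not_rat k2.\<omega>_not_rat \<omega>_d1_d2_not_rat k1.\<omega>_square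
    k2.\<omega>_square, of "a - a'" "b - b'" "c - c'" "e - e'"]
  by (auto simp: conjugate_eq of_rat_diff algebra_simps)

lemma totally_signed_iff:
  assumes "x = conjugate a b c e 1 1"
  shows "totally_signed d1 d2 x \<longleftrightarrow> (\<forall>\<sigma>\<in>{-1, 1}. \<forall>\<tau>\<in>{-1, 1}. sgn (conjugate a b c e \<sigma> \<tau>) = sgn x)"
proof -
  have "totally_signed d1 d2 x \<longleftrightarrow> (\<exists>a b c e. x = conjugate a b c e 1 1 \<and>
      (\<forall>\<sigma>\<in>{-1, 1}. \<forall>\<tau>\<in>{-1, 1}. sgn (conjugate a b c e \<sigma> \<tau>) = sgn x))"
    by (simp add: totally_signed_def conjugate_def)
  with assms show ?thesis
    by (metis conjugate_eq_iff)
qed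

lemma conjugate_product:
  fixes p1 q1 p2 q2 p3 q3 :: rat
  obtains a b c e where "\<And>\<sigma> \<tau>. \<sigma> \<in> {-1, 1} \<Longrightarrow> \<tau> \<in> {-1, 1} \<Longrightarrow> conjugate a b c e \<sigma> \<tau>
    = (of_rat p1 + of_rat q1 * (\<sigma> * k1.\<omega>)) * (of_rat p2 + of_rat q2 * (\<tau> * k2.\<omega>))
      * (of_rat p3 + of_rat q3 * ((\<sigma> * \<tau>) * k3.\<omega>))"
proof -
  \<comment> \<open>\<open>\<surd>d3 = \<surd>d1 \<surd>d2 / gcd d1 d2\<close>, so \<open>p3 + q3 \<surd>d3 = p3 + r3 \<surd>d1 \<surd>d2\<close>\<close>
  define r3 where "r3 = q3 / of_int (gcd d1 d2)"
  define D1 D2 :: rat where "D1 = of_int d1" and "D2 = of_int d2"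
  define a b c e where "a = p1 * p2 * p3 + q1 * q2 * r3 * D1 * D2"
    and "b = q1 * p2 * p3 + p1 * q2 * r3 * D2" and "c = p1 * q2 * p3 + q1 * p2 * r3 * D1"
    and "e = p1 * p2 * r3 + q1 * q2 * p3"
  show thesis
  proof
    fix \<sigma> \<tau> :: real
    assume "\<sigma> \<in> {-1, 1}" "\<tau> \<in> {-1, 1}"
    then have squares: "(\<sigma> * k1.\<omega>) * (\<sigma> * k1.\<omega>) = of_rat D1" "(\<tau> * k2.\<omega>) * (\<tau> * k2.\<omega>) = of_rat D2"
      using k1.\<omega>_square k2.\<omega>_square by (auto simp: D1_def D2_def)
    have "(\<sigma> * k1.\<omega>) * (\<tau> * k2.\<omega>) = (\<sigma> * \<tau>) * (k1.\<omega> * k2.\<omega>)"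
      by (simp only: mult_ac)
    then have "of_rat r3 * ((\<sigma> * k1.\<omega>) * (\<tau> * k2.\<omega>))
        = of_rat q3 / of_int (gcd d1 d2) * ((\<sigma> * \<tau>) * (of_int (gcd d1 d2) * k3.\<omega>))"
      by (simp only: r3_def of_rat_divide of_rat_of_int_eq \<omega>_d1_d2_eq)
    also have "\<dots> = of_rat q3 * ((\<sigma> * \<tau>) * k3.\<omega>)"
      using k1.gt_1 by simp
    finally have "of_rat r3 * ((\<sigma> * k1.\<omega>) * (\<tau> * k2.\<omega>)) = of_rat q3 * ((\<sigma> * \<tau>) * k3.\<omega>)" .
    then show "conjugate a b c e \<sigma> \<tau>
      = (of_rat p1 + of_rat q1 * (\<sigma> * k1.\<omega>)) * (of_rat p2 + of_rat q2 * (\<tau> * k2.\<omega>))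
        * (of_rat p3 + of_rat q3 * ((\<sigma> * \<tau>) * k3.\<omega>))"
      unfolding conjugate_eq a_def b_def c_def e_def biquadratic_product_coords[OF squares, symmetric]
      by (simp only:)
  qed
qed

lemma sgn_conjugate_unit_product:
  assumes units: "y1 \<in> quad_units d1" "y2 \<in> quad_units d2" "y3 \<in> quad_units d3"
  obtains a b c e where "y1 * y2 * y3 = conjugate a b c e 1 1"
    and "\<And>\<sigma> \<tau>. \<sigma> \<in> {-1, 1} \<Longrightarrow> \<tau> \<in> {-1, 1} \<Longrightarrow> sgn (conjugate a b c e \<sigma> \<tau>)
      = (if \<sigma> = 1 then 1 else quad_norm d1 y1) * (if \<tau> = 1 then 1 else quad_norm d2 y2)
        * (if \<sigma> * \<tau> = 1 then 1 else quad_norm d3 y3) * sgn (y1 * y2 * y3)"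
proof -
  obtain p1 q1 p2 q2 p3 q3 where y: "y1 = of_rat p1 + of_rat q1 * k1.\<omega>"
    "y2 = of_rat p2 + of_rat q2 * k2.\<omega>" "y3 = of_rat p3 + of_rat q3 * k3.\<omega>"
    by (metis units k1.quad_unitsE k2.quad_unitsE k3.quad_unitsE)
  obtain a b c e where factors: "\<And>\<sigma> \<tau>. \<sigma> \<in> {-1, 1} \<Longrightarrow> \<tau> \<in> {-1, 1} \<Longrightarrow> conjugate a b c e \<sigma> \<tau>
    = (of_rat p1 + of_rat q1 * (\<sigma> * k1.\<omega>)) * (of_rat p2 + of_rat q2 * (\<tau> * k2.\<omega>))
      * (of_rat p3 + of_rat q3 * ((\<sigma> * \<tau>) * k3.\<omega>))"
    using conjugate_product[of p1 q1 p2 q2 p3 q3] by blast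
  show thesis
  proof
    show "y1 * y2 * y3 = conjugate a b c e 1 1"
      by (simp add: factors y)
    fix \<sigma> \<tau> :: real
    assume \<sigma>: "\<sigma> \<in> {-1, 1}" and \<tau>: "\<tau> \<in> {-1, 1}"
    then have \<sigma>\<tau>: "\<sigma> * \<tau> \<in> {-1, 1}"
      by auto
    show "sgn (conjugate a b c e \<sigma> \<tau>)
      = (if \<sigma> = 1 then 1 else quad_norm d1 y1) * (if \<tau> = 1 then 1 else quad_norm d2 y2)
        * (if \<sigma> * \<tau> = 1 then 1 else quad_norm d3 y3) * sgn (y1 * y2 * y3)"
      unfolding factors[OF \<sigma> \<tau>] sgn_mult k1.sgn_conjugate_unit[OF units(1) y(1) \<sigma>]
        k2.sgn_conjugate_unit[OF units(2) y(2) \<tau>] k3.sgn_conjugate_unit[OF units(3) y(3) \<sigma>\<tau>]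
      by (simp only: mult_ac)
  qed
qed

lemma totally_signed_unit_product_iff:
  assumes units: "y1 \<in> quad_units d1" "y2 \<in> quad_units d2" "y3 \<in> quad_units d3"
  shows "totally_signed d1 d2 (y1 * y2 * y3) \<longleftrightarrow>
    quad_norm d1 y1 = quad_norm d2 y2 \<and> quad_norm d2 y2 = quad_norm d3 y3"
proof -
  obtain a b c e where y: "y1 * y2 * y3 = conjugate a b c e 1 1"
    and sgn: "\<And>\<sigma> \<tau>. \<sigma> \<in> {-1, 1} \<Longrightarrow> \<tau> \<in> {-1, 1} \<Longrightarrow> sgn (conjugate a b c e \<sigma> \<tau>)
      = (if \<sigma> = 1 then 1 else quad_norm d1 y1) * (if \<tau> = 1 then 1 else quad_norm d2 y2)
        * (if \<sigma> * \<tau> = 1 then 1 else quad_norm d3 y3) * sgn (y1 * y2 * y3)"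
    using sgn_conjugate_unit_product[OF units] by blast
  have "sgn (y1 * y2 * y3) \<noteq> 0"
    using units by (simp add: quad_units_def sgn_mult sgn_0_0)
  then have "totally_signed d1 d2 (y1 * y2 * y3) \<longleftrightarrow>
      quad_norm d1 y1 * quad_norm d2 y2 = 1 \<and> quad_norm d1 y1 * quad_norm d3 y3 = 1 \<and>
      quad_norm d2 y2 * quad_norm d3 y3 = 1"
    by (simp add: totally_signed_iff[OF y] sgn)
  also have "\<dots> \<longleftrightarrow> quad_norm d1 y1 = quad_norm d2 y2 \<and> quad_norm d2 y2 = quad_norm d3 y3"
    using k1.quad_norm_unit[OF units(1)] k2.quad_norm_unit[OF units(2)] k3.quad_norm_unit[OF units(3)]
    by auto
  finally show ?thesis .
qed

end

theorem mainTheorem2: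
  fixes d1 d2 d3 :: int and \<epsilon>1 \<epsilon>2 \<epsilon>3 lam1 lam2 lam3 s \<eta> :: real and m1 m2 m3 :: int
  assumes "d1 > 1" "d2 > 1" "squarefree d1" "squarefree d2" "d1 \<noteq> d2"
    and "d3 = (d1 * d2) div (gcd d1 d2)^2"
    and "fund_unit d1 \<epsilon>1" "fund_unit d2 \<epsilon>2" "fund_unit d3 \<epsilon>3"
    and "lam1 = quad_norm d1 \<epsilon>1" "lam2 = quad_norm d2 \<epsilon>2" "lam3 = quad_norm d3 \<epsilon>3"
    and "s \<in> {-1, 1}"
    and "\<eta> = s * \<epsilon>1 powi m1 * \<epsilon>2 powi m2 * \<epsilon>3 powi m3"
  shows "\<eta> \<in> OK_star d1 d2 d3 \<longleftrightarrow> (lam1 powi m1 = lam2 powi m2 \<and> lam2 powi m2 = lam3 powi m3)"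
proof -
  interpret real_biquadratic d1 d2 d3
    using assms(1-6) by unfold_locales
  have \<epsilon>: "\<epsilon>1 \<in> quad_units d1" "\<epsilon>2 \<in> quad_units d2" "\<epsilon>3 \<in> quad_units d3"
    using assms(7-9) by (simp_all add: fund_unit_def)
  define y1 y2 y3 where "y1 = s * \<epsilon>1 powi m1" and "y2 = \<epsilon>2 powi m2" and "y3 = \<epsilon>3 powi m3"
  have units: "y1 \<in> quad_units d1" "y2 \<in> quad_units d2" "y3 \<in> quad_units d3"
    using \<epsilon> assms(13) by (simp_all add: y1_def y2_def y3_def k1.quad_units_mult k1.sign_in_quad_units
      k1.quad_units_powi k2.quad_units_powi k3.quad_units_powi)
  have "\<epsilon>1 powi m1 \<in> quad_field d1"
    using k1.quad_units_powi[OF \<epsilon>(1)] k1.quad_units_subset_quad_field by blast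
  then have "quad_norm d1 y1 = lam1 powi m1"
    using assms(10,13) \<epsilon>(1) by (auto simp: y1_def k1.quad_norm_minus k1.quad_norm_powi)
  moreover have "quad_norm d2 y2 = lam2 powi m2" "quad_norm d3 y3 = lam3 powi m3"
    using assms(11,12) \<epsilon> by (simp_all add: y2_def y3_def k2.quad_norm_powi k3.quad_norm_powi)
  moreover have "\<eta> = y1 * y2 * y3"
    by (simp add: assms(14) y1_def y2_def y3_def)
  moreover have "y1 * y2 * y3 \<in> prod_units d1 d2 d3"
    using units by (auto simp: prod_units_def)
  ultimately show ?thesis
    using totally_signed_unit_product_iff[OF units] by (simp add: OK_star_def)
qed

end
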